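(* Let $G$ be a $(2K_2, C_4)$-free graph on $n$ vertices and let $\ell \ge \chi(G)+1$ be an integer. Then $\mathcal{R}_\ell(G)$ is connected and has diameter at most $4n$.
   Context: All graphs are finite and simple. A $k$-colouring of $G$ is a map $\alpha: V(G)\to\{1,\dots,k\}$ with $\alpha(u)\neq\alpha(v)$ for every edge $uv$; $\chi(G)$ is the chromatic number. The reconfiguration graph $\mathcal{R}_k(G)$ has the $k$-colourings of $G$ as vertices, two being adjacent if they differ on exactly one vertex. A graph is $(H_1,H_2)$-free if it has no induced subgraph isomorphic to $H_1$ or $H_2$; $2K_2$ is the disjoint union of two edges and $C_4$ is the 4-cycle. *)

theory Defs
  imports Main
begin

definition simple_graph :: "'a set \<Rightarrow> ('a \<Rightarrow> 'a \<Rightarrow> bool) \<Rightarrow> bool" where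
  "simple_graph V E \<longleftrightarrow> finite V \<and> (\<forall>u v. E u v \<longrightarrow> E v u) \<and> (\<forall>v. \<not> E v v)
     \<and> (\<forall>u v. E u v \<longrightarrow> u \<in> V \<and> v \<in> V)"

definition has_induced_2K2 :: "'a set \<Rightarrow> ('a \<Rightarrow> 'a \<Rightarrow> bool) \<Rightarrow> bool" where
  "has_induced_2K2 V E \<longleftrightarrow> (\<exists>a b c d. a \<in> V \<and> b \<in> V \<and> c \<in> V \<and> d \<in> V \<and>
     distinct [a, b, c, d] \<and> E a b \<and> E c d \<and>
     \<not> E a c \<and> \<not> E a d \<and> \<not> E b c \<and> \<not> E b d)"

definition has_induced_C4 :: "'a set \<Rightarrow> ('a \<Rightarrow> 'a \<Rightarrow> bool) \<Rightarrow> bool" where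
  "has_induced_C4 V E \<longleftrightarrow> (\<exists>a b c d. a \<in> V \<and> b \<in> V \<and> c \<in> V \<and> d \<in> V \<and>
     distinct [a, b, c, d] \<and> E a b \<and> E b c \<and> E c d \<and> E d a \<and>
     \<not> E a c \<and> \<not> E b d)"

text \<open>A k-colouring: map V to {1..k}, adjacent vertices get different colours.
  Outside V the map is fixed to 0 so that colourings are determined by their values on V.\<close>
definition is_colouring :: "nat \<Rightarrow> 'a set \<Rightarrow> ('a \<Rightarrow> 'a \<Rightarrow> bool) \<Rightarrow> ('a \<Rightarrow> nat) \<Rightarrow> bool" where
  "is_colouring k V E \<alpha> \<longleftrightarrow> (\<forall>v\<in>V. \<alpha> v \<in> {1..k}) \<and> (\<forall>v. v \<notin> V \<longrightarrow> \<alpha> v = 0)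
     \<and> (\<forall>u v. E u v \<longrightarrow> \<alpha> u \<noteq> \<alpha> v)"

definition chromatic_number :: "'a set \<Rightarrow> ('a \<Rightarrow> 'a \<Rightarrow> bool) \<Rightarrow> nat" where
  "chromatic_number V E = (LEAST k. \<exists>\<alpha>. is_colouring k V E \<alpha>)"

definition recon_adj :: "nat \<Rightarrow> 'a set \<Rightarrow> ('a \<Rightarrow> 'a \<Rightarrow> bool) \<Rightarrow> ('a \<Rightarrow> nat) \<Rightarrow> ('a \<Rightarrow> nat) \<Rightarrow> bool" where
  "recon_adj k V E \<alpha> \<beta> \<longleftrightarrow> is_colouring k V E \<alpha> \<and> is_colouring k V E \<beta> \<and>
     card {v \<in> V. \<alpha> v \<noteq> \<beta> v} = 1"

definition recon_walk :: "nat \<Rightarrow> 'a set \<Rightarrow> ('a \<Rightarrow> 'a \<Rightarrow> bool) \<Rightarrow> ('a \<Rightarrow> nat) list \<Rightarrow> bool" where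
  "recon_walk k V E ws \<longleftrightarrow> ws \<noteq> [] \<and> (\<forall>w\<in>set ws. is_colouring k V E w) \<and>
     (\<forall>i. Suc i < length ws \<longrightarrow> recon_adj k V E (ws ! i) (ws ! Suc i))"

definition recon_connected :: "nat \<Rightarrow> 'a set \<Rightarrow> ('a \<Rightarrow> 'a \<Rightarrow> bool) \<Rightarrow> bool" where
  "recon_connected k V E \<longleftrightarrow> (\<forall>\<alpha> \<beta>. is_colouring k V E \<alpha> \<longrightarrow> is_colouring k V E \<beta> \<longrightarrow>
     (\<exists>ws. recon_walk k V E ws \<and> hd ws = \<alpha> \<and> last ws = \<beta>))"

definition recon_diam_le :: "nat \<Rightarrow> 'a set \<Rightarrow> ('a \<Rightarrow> 'a \<Rightarrow> bool) \<Rightarrow> nat \<Rightarrow> bool" where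
  "recon_diam_le k V E d \<longleftrightarrow> (\<forall>\<alpha> \<beta>. is_colouring k V E \<alpha> \<longrightarrow> is_colouring k V E \<beta> \<longrightarrow>
     (\<exists>ws. recon_walk k V E ws \<and> hd ws = \<alpha> \<and> last ws = \<beta> \<and> length ws - 1 \<le> d))"

end

theory Submission
  imports Defs
begin

(* A (2K2, C4)-free graph either contains an induced C5, and is then that cycle joined completely
   to a clique plus an independent set seeing only the clique, or it is a split graph: a maximum
   clique K (of maximum degree sum, which forbids edges outside K) plus an independent set.
   In both cases the vertices carry chi(G) labels -- the clique vertices and three labels for the
   cycle -- with adjacent vertices labelled differently.  Every l-colouring reaches a colouring
   that is constant on label classes within n single-vertex moves (the cycle first, then the
   independent set, moved onto the colour of its class).  Since l > chi(G) there is a spare colour,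
   so two such class colourings are joined by recolouring each class twice, within 2n moves.
   Hence any two l-colourings are at distance at most n + 2n + n = 4n. *)

section \<open>Cliques and colourings\<close>

definition is_clique :: "'a set \<Rightarrow> ('a \<Rightarrow> 'a \<Rightarrow> bool) \<Rightarrow> 'a set \<Rightarrow> bool" where
  "is_clique V E K \<longleftrightarrow> K \<subseteq> V \<and> (\<forall>u\<in>K. \<forall>v\<in>K. u \<noteq> v \<longrightarrow> E u v)"

definition independent :: "('a \<Rightarrow> 'a \<Rightarrow> bool) \<Rightarrow> 'a set \<Rightarrow> bool" where
  "independent E S \<longleftrightarrow> (\<forall>u\<in>S. \<forall>v\<in>S. \<not> E u v)"

locale finite_simple_graph =
  fixes V :: "'a set" and E :: "'a \<Rightarrow> 'a \<Rightarrow> bool"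
  assumes simple: "simple_graph V E"
begin

lemma finite_vertices: "finite V"
  using simple by (simp add: simple_graph_def)

lemma edge_vertices: "E u v \<Longrightarrow> u \<in> V \<and> v \<in> V"
  using simple by (simp add: simple_graph_def)

lemma edge_sym: "E u v \<Longrightarrow> E v u"
  using simple by (simp add: simple_graph_def)

lemma edge_sym_iff: "E u v \<longleftrightarrow> E v u"
  using edge_sym by blast

lemma edge_irrefl: "\<not> E v v"
  using simple by (simp add: simple_graph_def)

lemma ex_colouring_card: "\<exists>\<alpha>. is_colouring (card V) V E \<alpha>"
proof -
  obtain h where h: "bij_betw h V {0..<card V}"
    using ex_bij_betw_finite_nat[OF finite_vertices] by blast
  define \<alpha> where "\<alpha> v = (if v \<in> V then Suc (h v) else 0)" for v
  have "is_colouring (card V) V E \<alpha>"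
    unfolding is_colouring_def
  proof (intro conjI ballI allI impI)
    fix v assume "v \<in> V"
    then show "\<alpha> v \<in> {1..card V}" using bij_betwE[OF h] by (fastforce simp: \<alpha>_def)
  next
    fix u v assume "E u v"
    then have "u \<in> V" "v \<in> V" "u \<noteq> v" using edge_vertices edge_irrefl by auto
    then show "\<alpha> u \<noteq> \<alpha> v" using bij_betw_imp_inj_on[OF h] by (auto simp: \<alpha>_def inj_on_def)
  qed (simp add: \<alpha>_def)
  then show ?thesis by blast
qed

lemma chromatic_number_ge:
  assumes "\<And>k \<alpha>. is_colouring k V E \<alpha> \<Longrightarrow> m \<le> k"
  shows "m \<le> chromatic_number V E"
proof -
  have "\<exists>\<alpha>. is_colouring (chromatic_number V E) V E \<alpha>"
    unfolding chromatic_number_def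
    by (rule LeastI[of "\<lambda>k. \<exists>\<alpha>. is_colouring k V E \<alpha>", OF ex_colouring_card])
  then show ?thesis using assms by blast
qed

lemma finite_clique: "is_clique V E K \<Longrightarrow> finite K"
  using finite_vertices by (auto simp: is_clique_def intro: finite_subset)

end

lemma card_clique_plus_colours_le:
  assumes "is_colouring k V E \<alpha>" and "is_clique V E K" and "C \<subseteq> V"
    and "\<And>u c. u \<in> K \<Longrightarrow> c \<in> C \<Longrightarrow> E u c"
  shows "card K + card (\<alpha> ` C) \<le> k"
proof -
  have inj: "inj_on \<alpha> K"
    using assms(1,2) unfolding is_colouring_def is_clique_def inj_on_def by metis
  have sub: "\<alpha> ` K \<union> \<alpha> ` C \<subseteq> {1..k}"
    using assms(1-3) unfolding is_colouring_def is_clique_def by auto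
  then have fin: "finite (\<alpha> ` K)" "finite (\<alpha> ` C)" by (auto intro: finite_subset)
  have "\<alpha> ` K \<inter> \<alpha> ` C = {}"
    using assms(1,4) unfolding is_colouring_def by fastforce
  then have "card K + card (\<alpha> ` C) = card (\<alpha> ` K \<union> \<alpha> ` C)"
    using fin inj by (simp add: card_Un_disjoint card_image)
  also have "\<dots> \<le> k" using card_mono[OF _ sub] by simp
  finally show ?thesis .
qed

lemma card_clique_le_colours:
  assumes "is_colouring k V E \<alpha>" and "is_clique V E K"
  shows "card K \<le> k"
  using card_clique_plus_colours_le[OF assms, of "{}"] by simp

definition clique_colouring :: "nat \<Rightarrow> 'b set \<Rightarrow> ('b \<Rightarrow> nat) \<Rightarrow> bool" where
  "clique_colouring l U \<pi> \<longleftrightarrow> inj_on \<pi> U \<and> \<pi> ` U \<subseteq> {1..l}"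

lemma clique_colouring_restrict:
  assumes "is_colouring l V E \<alpha>" and "is_clique V E K"
  shows "clique_colouring l K \<alpha>"
  using assms unfolding is_colouring_def is_clique_def clique_colouring_def inj_on_def by blast

section \<open>Recolouring sequences\<close>

definition recolour_step :: "nat \<Rightarrow> 'a set \<Rightarrow> ('a \<Rightarrow> 'a \<Rightarrow> bool) \<Rightarrow> ('a \<Rightarrow> nat) \<Rightarrow> ('a \<Rightarrow> nat) \<Rightarrow> bool" where
  "recolour_step l V E \<alpha> \<beta> \<longleftrightarrow> is_colouring l V E \<alpha> \<and> is_colouring l V E \<beta> \<and>
     (\<exists>v. \<forall>w. w \<noteq> v \<longrightarrow> \<alpha> w = \<beta> w)"

text \<open>A step may leave the colouring unchanged, so \<open>recolourable_within l V E \<alpha> \<beta> n\<close> says that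
  \<open>\<alpha>\<close> and \<open>\<beta>\<close> have distance at most \<open>n\<close> in \<open>\<R>\<^sub>l(G)\<close>.\<close>

inductive recolourable_within ::
  "nat \<Rightarrow> 'a set \<Rightarrow> ('a \<Rightarrow> 'a \<Rightarrow> bool) \<Rightarrow> ('a \<Rightarrow> nat) \<Rightarrow> ('a \<Rightarrow> nat) \<Rightarrow> nat \<Rightarrow> bool"
  for l V E where
  refl: "is_colouring l V E \<alpha> \<Longrightarrow> recolourable_within l V E \<alpha> \<alpha> 0"
| step: "recolourable_within l V E \<alpha> \<beta> n \<Longrightarrow> recolour_step l V E \<beta> \<gamma>
    \<Longrightarrow> recolourable_within l V E \<alpha> \<gamma> (Suc n)"

lemma recolourable_within_colourings:
  "recolourable_within l V E \<alpha> \<beta> n \<Longrightarrow> is_colouring l V E \<alpha> \<and> is_colouring l V E \<beta>"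
  by (induction rule: recolourable_within.induct) (auto simp: recolour_step_def)

lemma recolourable_within_trans:
  assumes "recolourable_within l V E \<alpha> \<beta> m" and "recolourable_within l V E \<beta> \<gamma> n"
  shows "recolourable_within l V E \<alpha> \<gamma> (m + n)"
  using assms(2,1) by induction (auto intro: recolourable_within.intros)

lemma recolourable_within_one:
  "recolour_step l V E \<alpha> \<beta> \<Longrightarrow> recolourable_within l V E \<alpha> \<beta> 1"
  using recolourable_within.step[OF recolourable_within.refl] by (fastforce simp: recolour_step_def)

lemma recolourable_within_sym:
  "recolourable_within l V E \<alpha> \<beta> n \<Longrightarrow> recolourable_within l V E \<beta> \<alpha> n"
proof (induction rule: recolourable_within.induct)
  case (refl \<alpha>)
  then show ?case by (rule recolourable_within.refl)
next
  case (step \<alpha> \<beta> n \<gamma>)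
  have "recolour_step l V E \<gamma> \<beta>"
    using step.hyps(2) unfolding recolour_step_def by metis
  then show ?case
    using recolourable_within_trans[OF recolourable_within_one step.IH] by simp
qed

lemma recolourable_within_mono:
  assumes "recolourable_within l V E \<alpha> \<beta> m" and "m \<le> n"
  shows "recolourable_within l V E \<alpha> \<beta> n"
proof -
  have \<beta>: "is_colouring l V E \<beta>"
    using recolourable_within_colourings[OF assms(1)] by simp
  have "recolourable_within l V E \<beta> \<beta> k" for k
    by (induction k) (use \<beta> in \<open>auto intro: recolourable_within.intros simp: recolour_step_def\<close>)
  from recolourable_within_trans[OF assms(1) this[of "n - m"]] show ?thesis
    using assms(2) by simp
qed

lemma recolour_step_recon_adj:
  assumes "recolour_step l V E \<alpha> \<beta>" and "\<alpha> \<noteq> \<beta>"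
  shows "recon_adj l V E \<alpha> \<beta>"
proof -
  obtain v where v: "\<forall>w. w \<noteq> v \<longrightarrow> \<alpha> w = \<beta> w"
    using assms(1) by (auto simp: recolour_step_def)
  with assms(2) have "\<alpha> v \<noteq> \<beta> v" by auto
  moreover from this have "v \<in> V"
    using assms(1) unfolding recolour_step_def is_colouring_def by metis
  ultimately have "{w \<in> V. \<alpha> w \<noteq> \<beta> w} = {v}" using v by auto
  then show ?thesis using assms(1) by (simp add: recon_adj_def recolour_step_def)
qed

lemma recon_walk_snoc:
  assumes "recon_walk l V E ws" and "recon_adj l V E (last ws) \<gamma>"
  shows "recon_walk l V E (ws @ [\<gamma>])"
  unfolding recon_walk_def
proof (intro conjI allI impI)
  show "\<forall>w\<in>set (ws @ [\<gamma>]). is_colouring l V E w"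
    using assms by (auto simp: recon_walk_def recon_adj_def)
next
  fix i assume i: "Suc i < length (ws @ [\<gamma>])"
  have ne: "ws \<noteq> []" using assms(1) by (simp add: recon_walk_def)
  show "recon_adj l V E ((ws @ [\<gamma>]) ! i) ((ws @ [\<gamma>]) ! Suc i)"
  proof (cases "Suc i < length ws")
    case True
    then show ?thesis using assms(1) by (simp add: recon_walk_def nth_append)
  next
    case False
    with i have "i = length ws - 1" and "Suc i = length ws" by simp_all
    then show ?thesis using assms(2) ne by (simp add: nth_append last_conv_nth)
  qed
qed simp

lemma recolourable_within_recon_walk:
  "recolourable_within l V E \<alpha> \<beta> n \<Longrightarrow>
    \<exists>ws. recon_walk l V E ws \<and> hd ws = \<alpha> \<and> last ws = \<beta> \<and> length ws - 1 \<le> n"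
proof (induction rule: recolourable_within.induct)
  case (refl \<alpha>)
  then show ?case by (intro exI[of _ "[\<alpha>]"]) (auto simp: recon_walk_def)
next
  case (step \<alpha> \<beta> n \<gamma>)
  then obtain ws where ws: "recon_walk l V E ws" "hd ws = \<alpha>" "last ws = \<beta>" "length ws - 1 \<le> n"
    by blast
  show ?case
  proof (cases "\<beta> = \<gamma>")
    case True
    with ws show ?thesis by auto
  next
    case False
    with step.hyps(2) ws(3) have "recon_adj l V E (last ws) \<gamma>"
      by (simp add: recolour_step_recon_adj)
    with ws have "recon_walk l V E (ws @ [\<gamma>])" by (simp add: recon_walk_snoc)
    moreover have "ws \<noteq> []" using ws(1) by (simp add: recon_walk_def)
    ultimately show ?thesis using ws by (intro exI[of _ "ws @ [\<gamma>]"]) auto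
  qed
qed

lemma recon_connected_if_diam_le:
  "recon_diam_le l V E d \<Longrightarrow> recon_connected l V E"
  unfolding recon_diam_le_def recon_connected_def by blast

lemma is_colouring_fun_upd:
  assumes "is_colouring l V E \<alpha>" and "v \<in> V" and "c \<in> {1..l}"
    and "\<And>u. E u v \<Longrightarrow> \<alpha> u \<noteq> c" and "\<And>u. E v u \<Longrightarrow> \<alpha> u \<noteq> c"
  shows "is_colouring l V E (\<alpha>(v := c))"
  using assms unfolding is_colouring_def
  by (simp add: fun_upd_def) (metis (no_types))

lemma recolourable_within_fun_upd:
  assumes "is_colouring l V E \<alpha>" and "v \<in> V" and "c \<in> {1..l}"
    and "\<And>u. E u v \<Longrightarrow> \<alpha> u \<noteq> c" and "\<And>u. E v u \<Longrightarrow> \<alpha> u \<noteq> c"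
  shows "recolourable_within l V E \<alpha> (\<alpha>(v := c)) 1"
  using assms is_colouring_fun_upd[OF assms]
  by (intro recolourable_within_one) (auto simp: recolour_step_def)

text \<open>Recolour the vertices of \<open>S\<close> one at a time: every intermediate map is a colouring, since
  a vertex of \<open>S\<close> only sees vertices outside \<open>S\<close>, where both colourings agree.\<close>

lemma recolourable_within_independent:
  assumes "finite S" and "independent E S"
    and "is_colouring l V E \<alpha>" and "is_colouring l V E \<beta>" and "\<forall>v. v \<notin> S \<longrightarrow> \<alpha> v = \<beta> v"
  shows "recolourable_within l V E \<alpha> \<beta> (card S)"
  using assms
proof (induction S arbitrary: \<alpha> rule: finite_induct)
  case empty
  then have "\<alpha> = \<beta>" by auto
  with empty show ?case by (simp add: recolourable_within.refl)
next
  case (insert x S)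
  let ?\<alpha>' = "\<alpha>(x := \<beta> x)"
  have "recolourable_within l V E \<alpha> ?\<alpha>' 1"
  proof (cases "x \<in> V")
    case True
    have "\<beta> x \<in> {1..l}" using insert.prems(3) True by (simp add: is_colouring_def)
    moreover have "\<alpha> u \<noteq> \<beta> x" if "E u x \<or> E x u" for u
    proof -
      have "u \<notin> insert x S" using insert.prems(1) that by (auto simp: independent_def)
      then have "\<alpha> u = \<beta> u" using insert.prems(4) by simp
      moreover have "\<beta> u \<noteq> \<beta> x" using insert.prems(3) that unfolding is_colouring_def by metis
      ultimately show ?thesis by simp
    qed
    ultimately show ?thesis
      using recolourable_within_fun_upd[OF insert.prems(2) True] by blast
  next
    case False
    then have "?\<alpha>' = \<alpha>" using insert.prems(2,3) by (auto simp: is_colouring_def)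
    moreover have "recolour_step l V E \<alpha> \<alpha>" using insert.prems(2) by (simp add: recolour_step_def)
    ultimately show ?thesis by (metis recolourable_within_one)
  qed
  moreover have "recolourable_within l V E ?\<alpha>' \<beta> (card S)"
  proof (rule insert.IH)
    show "independent E S" using insert.prems(1) by (simp add: independent_def)
    show "is_colouring l V E ?\<alpha>'" using recolourable_within_colourings[OF calculation] by simp
  qed (use insert.prems in auto)
  ultimately show ?case
    using recolourable_within_trans insert.hyps by fastforce
qed

section \<open>Class colourings of a proper labelling\<close>

lemma ex_colour_not_in:
  assumes "finite B" and "card B < l"
  obtains c where "c \<in> {1..l}" and "c \<notin> B"
proof -
  have "\<not> {1..l} \<subseteq> B"
    using card_mono[OF assms(1), of "{1..l}"] assms(2) by auto
  then show ?thesis using that by blast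
qed

lemma clique_colouring_fun_upd:
  assumes "clique_colouring l U \<pi>" and "c \<in> {1..l}" and "c \<notin> \<pi> ` (U - {x})"
  shows "clique_colouring l U (\<pi>(x := c))"
  unfolding clique_colouring_def
proof
  show "inj_on (\<pi>(x := c)) U"
  proof (rule inj_onI)
    fix u w assume "u \<in> U" "w \<in> U" "(\<pi>(x := c)) u = (\<pi>(x := c)) w"
    then show "u = w"
      using assms(1,3) unfolding clique_colouring_def inj_on_def
      by (cases "u = x"; cases "w = x") (auto simp: image_iff)
  qed
  show "(\<pi>(x := c)) ` U \<subseteq> {1..l}"
    using assms(1,2) by (auto simp: clique_colouring_def)
qed

text \<open>If no \<open>\<pi>' x\<close> with \<open>x \<in> T\<close> is free for \<open>\<pi>\<close>, then \<open>\<pi>' ` U \<subseteq> \<pi> ` U\<close>, so a colour missed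
  by \<open>\<pi>\<close> (one exists as \<open>card U < l\<close>) is missed by \<open>\<pi>'\<close> too.\<close>

lemma ex_common_free_colour:
  assumes "finite U" and "card U < l" and "T \<subseteq> U" and "T \<noteq> {}"
    and "clique_colouring l U \<pi>" and "clique_colouring l U \<pi>'"
    and "\<forall>u. u \<notin> T \<longrightarrow> \<pi> u = \<pi>' u"
  obtains x c where "x \<in> T" and "c \<in> {1..l}" and "c \<notin> \<pi> ` (U - {x})" and "c \<notin> \<pi>' ` (U - {x})"
proof (cases "\<exists>x\<in>T. \<pi>' x \<notin> \<pi> ` (U - {x})")
  case True
  then obtain x where x: "x \<in> T" "\<pi>' x \<notin> \<pi> ` (U - {x})" by blast
  moreover have "\<pi>' x \<in> {1..l}"
    using assms(3,6) x(1) unfolding clique_colouring_def by blast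
  moreover have "\<pi>' x \<notin> \<pi>' ` (U - {x})"
    using assms(3,6) x(1) unfolding clique_colouring_def inj_on_def by blast
  ultimately show ?thesis using that by blast
next
  case False
  obtain c where c: "c \<in> {1..l}" "c \<notin> \<pi> ` U"
    using ex_colour_not_in[of "\<pi> ` U" l] assms(1,2) card_image_le[OF assms(1), of \<pi>] by force
  have "\<pi>' u \<in> \<pi> ` U" if "u \<in> U" for u
    using False assms(7) that by (cases "u \<in> T") (blast, metis imageI)
  with c obtain x where "x \<in> T" "c \<notin> \<pi> ` (U - {x})" "c \<notin> \<pi>' ` (U - {x})"
    using assms(4) by blast
  then show ?thesis using that c(1) by blast
qed

lemma card_preimage_remove:
  assumes "finite V" and "x \<in> T"
  shows "card {v \<in> V. f v \<in> T} = card {v \<in> V. f v = x} + card {v \<in> V. f v \<in> T - {x}}"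
proof -
  have "{v \<in> V. f v \<in> T} = {v \<in> V. f v = x} \<union> {v \<in> V. f v \<in> T - {x}}"
    using assms(2) by auto
  then show ?thesis using assms(1) by (simp add: card_Un_disjoint disjoint_iff)
qed

definition class_colouring :: "'a set \<Rightarrow> ('a \<Rightarrow> 'b) \<Rightarrow> ('b \<Rightarrow> nat) \<Rightarrow> 'a \<Rightarrow> nat" where
  "class_colouring V \<gamma> \<pi> v = (if v \<in> V then \<pi> (\<gamma> v) else 0)"

text \<open>When \<open>card U < l\<close> the class colourings \<open>\<pi> \<circ> \<gamma>\<close> are pairwise close in \<open>\<R>\<^sub>l(G)\<close>: a spare
  colour lets one permute the colours of the label classes one class at a time.\<close>

locale proper_labelling = finite_simple_graph V E
  for V :: "'a set" and E :: "'a \<Rightarrow> 'a \<Rightarrow> bool" +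
  fixes \<gamma> :: "'a \<Rightarrow> 'b" and U :: "'b set"
  assumes label_in: "v \<in> V \<Longrightarrow> \<gamma> v \<in> U"
    and label_neq: "E u v \<Longrightarrow> \<gamma> u \<noteq> \<gamma> v"
    and finite_labels: "finite U"
begin

lemma class_colouring_is_colouring:
  assumes "clique_colouring l U \<pi>"
  shows "is_colouring l V E (class_colouring V \<gamma> \<pi>)"
  unfolding is_colouring_def
proof (intro conjI ballI allI impI)
  fix v assume "v \<in> V"
  with assms label_in have "\<pi> (\<gamma> v) \<in> {1..l}" unfolding clique_colouring_def by blast
  with \<open>v \<in> V\<close> show "class_colouring V \<gamma> \<pi> v \<in> {1..l}" by (simp add: class_colouring_def)
next
  fix u v assume "E u v"
  then have "u \<in> V" "v \<in> V" "\<gamma> u \<noteq> \<gamma> v" using edge_vertices label_neq by auto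
  with assms label_in have "\<pi> (\<gamma> u) \<noteq> \<pi> (\<gamma> v)"
    unfolding clique_colouring_def by (meson inj_on_contraD)
  with \<open>u \<in> V\<close> \<open>v \<in> V\<close> show "class_colouring V \<gamma> \<pi> u \<noteq> class_colouring V \<gamma> \<pi> v"
    by (simp add: class_colouring_def)
qed (simp add: class_colouring_def)

lemma recolourable_within_class_update:
  assumes "clique_colouring l U \<pi>" and "clique_colouring l U (\<pi>(x := c))"
  shows "recolourable_within l V E (class_colouring V \<gamma> \<pi>) (class_colouring V \<gamma> (\<pi>(x := c)))
           (card {v \<in> V. \<gamma> v = x})"
proof (rule recolourable_within_independent)
  show "finite {v \<in> V. \<gamma> v = x}" using finite_vertices by simp
  show "independent E {v \<in> V. \<gamma> v = x}"
    by (auto simp: independent_def dest!: label_neq)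
  show "\<forall>v. v \<notin> {v \<in> V. \<gamma> v = x} \<longrightarrow>
      class_colouring V \<gamma> \<pi> v = class_colouring V \<gamma> (\<pi>(x := c)) v"
    by (simp add: class_colouring_def)
qed (use assms class_colouring_is_colouring in blast)+

lemma recolourable_within_between_class_colourings:
  assumes "card U < l" and "T \<subseteq> U"
    and "clique_colouring l U \<pi>" and "clique_colouring l U \<pi>'"
    and "\<forall>u. u \<notin> T \<longrightarrow> \<pi> u = \<pi>' u"
  shows "recolourable_within l V E (class_colouring V \<gamma> \<pi>) (class_colouring V \<gamma> \<pi>')
           (2 * card {v \<in> V. \<gamma> v \<in> T})"
proof -
  have "finite T" using assms(2) finite_labels by (rule finite_subset)
  then show ?thesis
    using assms(2-)
  proof (induction T arbitrary: \<pi> \<pi>' rule: finite_psubset_induct)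
    case (psubset T)
    show ?case
    proof (cases "T = {}")
      case True
      with psubset.prems(4) have "\<pi> = \<pi>'" by blast
      with True psubset.prems(2) show ?thesis
        by (simp add: recolourable_within.refl class_colouring_is_colouring)
    next
      case False
      then obtain x c where x: "x \<in> T" and c: "c \<in> {1..l}"
        and free: "c \<notin> \<pi> ` (U - {x})" "c \<notin> \<pi>' ` (U - {x})"
        using ex_common_free_colour[OF finite_labels assms(1) psubset.prems(1) False psubset.prems(2-)] by blast
      let ?\<pi>\<^sub>c = "\<pi>(x := c)" and ?\<pi>'\<^sub>c = "\<pi>'(x := c)"
      have \<pi>c: "clique_colouring l U ?\<pi>\<^sub>c"
        using clique_colouring_fun_upd[OF psubset.prems(2) c free(1)] .
      have \<pi>'c: "clique_colouring l U ?\<pi>'\<^sub>c"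
        using clique_colouring_fun_upd[OF psubset.prems(3) c free(2)] .
      let ?n = "card {v \<in> V. \<gamma> v = x}"
      have to_\<pi>c: "recolourable_within l V E (class_colouring V \<gamma> \<pi>) (class_colouring V \<gamma> ?\<pi>\<^sub>c) ?n"
        using recolourable_within_class_update[OF psubset.prems(2) \<pi>c] .
      have between: "recolourable_within l V E (class_colouring V \<gamma> ?\<pi>\<^sub>c) (class_colouring V \<gamma> ?\<pi>'\<^sub>c)
          (2 * card {v \<in> V. \<gamma> v \<in> T - {x}})"
      proof (rule psubset.IH)
        show "T - {x} \<subset> T" and "T - {x} \<subseteq> U" using x psubset.prems(1) by auto
        show "\<forall>u. u \<notin> T - {x} \<longrightarrow> ?\<pi>\<^sub>c u = ?\<pi>'\<^sub>c u" using psubset.prems(4) by simp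
      qed (fact \<pi>c \<pi>'c)+
      have from_\<pi>'c: "recolourable_within l V E (class_colouring V \<gamma> ?\<pi>'\<^sub>c) (class_colouring V \<gamma> \<pi>') ?n"
        using recolourable_within_class_update[OF \<pi>'c, where x = x and c = "\<pi>' x"] psubset.prems(3) by simp
      have "recolourable_within l V E (class_colouring V \<gamma> \<pi>) (class_colouring V \<gamma> \<pi>')
          (?n + 2 * card {v \<in> V. \<gamma> v \<in> T - {x}} + ?n)"
        using recolourable_within_trans[OF recolourable_within_trans[OF to_\<pi>c between] from_\<pi>'c] .
      then show ?thesis
        using card_preimage_remove[OF finite_vertices x, of \<gamma>] by (simp add: algebra_simps)
    qed
  qed
qed

lemma recolourable_within_onto_class_colouring:
  assumes "is_colouring l V E \<alpha>" and "clique_colouring l U \<pi>"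
    and "I \<subseteq> V" and "independent E I" and "\<forall>v\<in>V - I. \<alpha> v = \<pi> (\<gamma> v)"
  shows "recolourable_within l V E \<alpha> (class_colouring V \<gamma> \<pi>) (card I)"
proof (rule recolourable_within_independent)
  show "finite I" using assms(3) finite_vertices by (rule finite_subset)
qed (use assms class_colouring_is_colouring in \<open>auto simp: class_colouring_def is_colouring_def\<close>)

lemma recon_diam_le_if_recolourable_to_class_colourings:
  assumes "card U < l"
    and reduce: "\<And>\<alpha>. is_colouring l V E \<alpha> \<Longrightarrow>
      \<exists>\<pi>. clique_colouring l U \<pi> \<and> recolourable_within l V E \<alpha> (class_colouring V \<gamma> \<pi>) n"
  shows "recon_diam_le l V E (2 * n + 2 * card V)"
  unfolding recon_diam_le_def
proof (intro allI impI)
  fix \<alpha> \<beta> assume "is_colouring l V E \<alpha>" and "is_colouring l V E \<beta>"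
  then obtain \<pi>\<^sub>\<alpha> \<pi>\<^sub>\<beta> where \<pi>\<^sub>\<alpha>: "clique_colouring l U \<pi>\<^sub>\<alpha>"
    and \<alpha>: "recolourable_within l V E \<alpha> (class_colouring V \<gamma> \<pi>\<^sub>\<alpha>) n"
    and \<pi>\<^sub>\<beta>: "clique_colouring l U \<pi>\<^sub>\<beta>"
    and \<beta>: "recolourable_within l V E \<beta> (class_colouring V \<gamma> \<pi>\<^sub>\<beta>) n"
    using reduce by meson
  define \<pi> where "\<pi> u = (if u \<in> U then \<pi>\<^sub>\<beta> u else \<pi>\<^sub>\<alpha> u)" for u
  have "class_colouring V \<gamma> \<pi> = class_colouring V \<gamma> \<pi>\<^sub>\<beta>"
    using label_in by (auto simp: class_colouring_def \<pi>_def)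
  moreover have "clique_colouring l U \<pi>"
    using \<pi>\<^sub>\<beta> by (simp add: clique_colouring_def \<pi>_def inj_on_def)
  moreover have "recolourable_within l V E (class_colouring V \<gamma> \<pi>\<^sub>\<alpha>) (class_colouring V \<gamma> \<pi>)
      (2 * card {v \<in> V. \<gamma> v \<in> U})"
    by (rule recolourable_within_between_class_colourings[OF assms(1) subset_refl \<pi>\<^sub>\<alpha> calculation(2)])
      (simp add: \<pi>_def)
  ultimately have "recolourable_within l V E (class_colouring V \<gamma> \<pi>\<^sub>\<alpha>) (class_colouring V \<gamma> \<pi>\<^sub>\<beta>)
      (2 * card {v \<in> V. \<gamma> v \<in> U})"
    by simp
  moreover have "card {v \<in> V. \<gamma> v \<in> U} \<le> card V"
    using finite_vertices by (simp add: card_mono)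
  ultimately have "recolourable_within l V E (class_colouring V \<gamma> \<pi>\<^sub>\<alpha>) (class_colouring V \<gamma> \<pi>\<^sub>\<beta>)
      (2 * card V)"
    by (simp add: recolourable_within_mono)
  then have "recolourable_within l V E \<alpha> \<beta> (n + 2 * card V + n)"
    using recolourable_within_trans[OF recolourable_within_trans[OF \<alpha>]] recolourable_within_sym[OF \<beta>]
    by blast
  then show "\<exists>ws. recon_walk l V E ws \<and> hd ws = \<alpha> \<and> last ws = \<beta> \<and> length ws - 1 \<le> 2 * n + 2 * card V"
    using recolourable_within_recon_walk by fastforce
qed

end

definition reducing_labelling :: "'a set \<Rightarrow> ('a \<Rightarrow> 'a \<Rightarrow> bool) \<Rightarrow> ('a \<Rightarrow> 'b) \<Rightarrow> 'b set \<Rightarrow> bool" where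
  "reducing_labelling V E \<gamma> U \<longleftrightarrow> proper_labelling V E \<gamma> U \<and>
     (\<forall>k \<alpha>. is_colouring k V E \<alpha> \<longrightarrow> card U \<le> k) \<and>
     (\<forall>l \<alpha>. card U < l \<longrightarrow> is_colouring l V E \<alpha> \<longrightarrow>
        (\<exists>\<pi>. clique_colouring l U \<pi> \<and> recolourable_within l V E \<alpha> (class_colouring V \<gamma> \<pi>) (card V)))"

lemma recon_diam_le_if_reducing_labelling:
  assumes "reducing_labelling V E \<gamma> U" and "chromatic_number V E < l"
  shows "recon_diam_le l V E (4 * card V)"
proof -
  interpret proper_labelling V E \<gamma> U
    using assms(1) by (simp add: reducing_labelling_def)
  have "card U \<le> chromatic_number V E"
    using assms(1) unfolding reducing_labelling_def by (intro chromatic_number_ge) blast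
  with assms(2) have "card U < l" by simp
  then have "recon_diam_le l V E (2 * card V + 2 * card V)"
    using assms(1) by (intro recon_diam_le_if_recolourable_to_class_colourings)
      (auto simp: reducing_labelling_def)
  then show ?thesis by (simp add: algebra_simps)
qed

definition split_label :: "('a \<Rightarrow> 'a \<Rightarrow> bool) \<Rightarrow> 'a set \<Rightarrow> 'a \<Rightarrow> 'a" where
  "split_label E K v = (if v \<in> K then v else SOME a. a \<in> K \<and> \<not> E a v)"

context finite_simple_graph
begin

lemma split_label_proper:
  assumes K: "is_clique V E K" and indep: "independent E (V - K)"
    and nonadj: "\<forall>v\<in>V - K. \<exists>a\<in>K. \<not> E a v"
  shows "proper_labelling V E (split_label E K) K"
proof
  have outside: "split_label E K v \<in> K \<and> \<not> E (split_label E K v) v" if "v \<in> V - K" for v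
    using someI_ex[of "\<lambda>a. a \<in> K \<and> \<not> E a v"] nonadj that by (auto simp: split_label_def)
  show "split_label E K v \<in> K" if "v \<in> V" for v
    using outside that by (auto simp: split_label_def)
  show "finite K" using finite_clique[OF K] .
  show "split_label E K u \<noteq> split_label E K v" if "E u v" for u v
  proof -
    have "u \<in> V" "v \<in> V" "u \<noteq> v" using that edge_vertices edge_irrefl by auto
    moreover have "u \<in> K \<or> v \<in> K"
      using indep that \<open>u \<in> V\<close> \<open>v \<in> V\<close> by (auto simp: independent_def)
    moreover have "split_label E K v \<noteq> u" if "u \<in> K" "v \<notin> K"
      using outside[of v] \<open>E u v\<close> \<open>v \<in> V\<close> that by auto
    moreover have "split_label E K u \<noteq> v" if "v \<in> K" "u \<notin> K"
      using outside[of u] \<open>E u v\<close> \<open>u \<in> V\<close> that by (auto simp: edge_sym_iff)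
    ultimately show ?thesis by (auto simp: split_label_def)
  qed
qed

lemma split_reducing_labelling:
  assumes K: "is_clique V E K" and indep: "independent E (V - K)"
    and nonadj: "\<forall>v\<in>V - K. \<exists>a\<in>K. \<not> E a v"
  shows "reducing_labelling V E (split_label E K) K"
proof -
  interpret proper_labelling V E "split_label E K" K
    using split_label_proper[OF assms] .
  have "\<exists>\<pi>. clique_colouring l K \<pi> \<and>
      recolourable_within l V E \<alpha> (class_colouring V (split_label E K) \<pi>) (card V)"
    if \<alpha>: "is_colouring l V E \<alpha>" for l \<alpha>
  proof (intro exI conjI)
    show "clique_colouring l K \<alpha>" using clique_colouring_restrict[OF \<alpha> K] .
    have "recolourable_within l V E \<alpha> (class_colouring V (split_label E K) \<alpha>) (card (V - K))"
      by (rule recolourable_within_onto_class_colouring[OF \<alpha> \<open>clique_colouring l K \<alpha>\<close> _ indep])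
        (auto simp: split_label_def)
    then show "recolourable_within l V E \<alpha> (class_colouring V (split_label E K) \<alpha>) (card V)"
      using finite_vertices by (auto intro: recolourable_within_mono card_mono)
  qed
  then show ?thesis
    using card_clique_le_colours[OF _ K] proper_labelling_axioms
    by (auto simp: reducing_labelling_def)
qed

end

section \<open>Structure of \<open>(2K\<^sub>2, C\<^sub>4)\<close>-free graphs\<close>

definition induced_C5 :: "'a set \<Rightarrow> ('a \<Rightarrow> 'a \<Rightarrow> bool) \<Rightarrow> 'a \<Rightarrow> 'a \<Rightarrow> 'a \<Rightarrow> 'a \<Rightarrow> 'a \<Rightarrow> bool" where
  "induced_C5 V E c0 c1 c2 c3 c4 \<longleftrightarrow>
     c0 \<in> V \<and> c1 \<in> V \<and> c2 \<in> V \<and> c3 \<in> V \<and> c4 \<in> V \<and> distinct [c0, c1, c2, c3, c4] \<and>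
     E c0 c1 \<and> E c1 c2 \<and> E c2 c3 \<and> E c3 c4 \<and> E c4 c0 \<and>
     \<not> E c0 c2 \<and> \<not> E c0 c3 \<and> \<not> E c1 c3 \<and> \<not> E c1 c4 \<and> \<not> E c2 c4"

lemma three_le_card_colours_C5:
  assumes "is_colouring k V E \<alpha>" and "E c0 c1" "E c1 c2" "E c2 c3" "E c3 c4" "E c4 c0"
  shows "3 \<le> card (\<alpha> ` {c0, c1, c2, c3, c4})"
proof -
  have neq: "\<alpha> c0 \<noteq> \<alpha> c1" "\<alpha> c1 \<noteq> \<alpha> c2" "\<alpha> c2 \<noteq> \<alpha> c3" "\<alpha> c3 \<noteq> \<alpha> c4" "\<alpha> c4 \<noteq> \<alpha> c0"
    using assms unfolding is_colouring_def by blast+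
  text \<open>An odd cycle is not 2-coloured: \<open>c\<^sub>0, c\<^sub>1\<close> and one of \<open>c\<^sub>2, c\<^sub>3, c\<^sub>4\<close> get three colours.\<close>
  have "\<exists>c\<in>{c2, c3, c4}. \<alpha> c \<noteq> \<alpha> c0 \<and> \<alpha> c \<noteq> \<alpha> c1"
    using neq by (cases "\<alpha> c2 = \<alpha> c0"; cases "\<alpha> c3 = \<alpha> c1") auto
  then obtain c where "c \<in> {c2, c3, c4}" and "\<alpha> c \<noteq> \<alpha> c0" and "\<alpha> c \<noteq> \<alpha> c1"
    by blast
  then have "card {\<alpha> c0, \<alpha> c1, \<alpha> c} = 3" using neq(1) by simp
  moreover have "{\<alpha> c0, \<alpha> c1, \<alpha> c} \<subseteq> \<alpha> ` {c0, c1, c2, c3, c4}" using \<open>c \<in> {c2, c3, c4}\<close> by auto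
  ultimately show ?thesis by (metis card_mono finite_imageI finite.emptyI finite_insert)
qed

definition degree :: "'a set \<Rightarrow> ('a \<Rightarrow> 'a \<Rightarrow> bool) \<Rightarrow> 'a \<Rightarrow> nat" where
  "degree V E v = card {u \<in> V. E v u}"

definition heaviest_max_clique :: "'a set \<Rightarrow> ('a \<Rightarrow> 'a \<Rightarrow> bool) \<Rightarrow> 'a set \<Rightarrow> bool" where
  "heaviest_max_clique V E K \<longleftrightarrow> is_clique V E K \<and>
     (\<forall>K'. is_clique V E K' \<longrightarrow> card K' \<le> card K) \<and>
     (\<forall>K'. is_clique V E K' \<and> card K' = card K \<longrightarrow> sum (degree V E) K' \<le> sum (degree V E) K)"

context finite_simple_graph
begin

lemma ex_heaviest_max_clique: "\<exists>K. heaviest_max_clique V E K"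
proof -
  have card_le: "card K \<le> card V" if "is_clique V E K" for K
    using that finite_vertices by (simp add: is_clique_def card_mono)
  have "\<exists>K. is_clique V E K \<and> (\<forall>K'. is_clique V E K' \<longrightarrow> card K' \<le> card K)"
  proof (rule Lattices_Big.ex_has_greatest_nat)
    show "is_clique V E {}" by (simp add: is_clique_def)
    show "\<forall>K. is_clique V E K \<longrightarrow> card K < Suc (card V)" using card_le by (simp add: le_imp_less_Suc)
  qed
  then obtain K\<^sub>0 where K\<^sub>0: "is_clique V E K\<^sub>0" and max: "\<And>K. is_clique V E K \<Longrightarrow> card K \<le> card K\<^sub>0"
    by blast
  have sum_le: "sum (degree V E) K \<le> card V * card V" if "is_clique V E K" for K
  proof -
    have "degree V E v \<le> card V" for v
      unfolding degree_def using finite_vertices by (simp add: card_mono)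
    then have "sum (degree V E) K \<le> card K * card V"
      using sum_bounded_above[of K "degree V E" "card V"] by simp
    also have "\<dots> \<le> card V * card V" using card_le[OF that] by simp
    finally show ?thesis .
  qed
  have "\<exists>K. (is_clique V E K \<and> card K = card K\<^sub>0) \<and>
      (\<forall>K'. is_clique V E K' \<and> card K' = card K\<^sub>0 \<longrightarrow> sum (degree V E) K' \<le> sum (degree V E) K)"
  proof (rule Lattices_Big.ex_has_greatest_nat)
    show "is_clique V E K\<^sub>0 \<and> card K\<^sub>0 = card K\<^sub>0" using K\<^sub>0 by simp
    show "\<forall>K. is_clique V E K \<and> card K = card K\<^sub>0 \<longrightarrow> sum (degree V E) K < Suc (card V * card V)"
      using sum_le by (simp add: le_imp_less_Suc)
  qed
  then obtain K where "is_clique V E K" "card K = card K\<^sub>0"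
    and "\<And>K'. is_clique V E K' \<Longrightarrow> card K' = card K\<^sub>0 \<Longrightarrow> sum (degree V E) K' \<le> sum (degree V E) K"
    by blast
  then show ?thesis using max by (auto simp: heaviest_max_clique_def)
qed

end

locale two_K2_C4_free = finite_simple_graph +
  assumes no_2K2: "\<not> has_induced_2K2 V E"
    and no_C4: "\<not> has_induced_C4 V E"
begin

lemma no_induced_2K2:
  assumes "a \<in> V" "b \<in> V" "c \<in> V" "d \<in> V" "distinct [a, b, c, d]" "E a b" "E c d"
    and "\<not> E a c" "\<not> E a d" "\<not> E b c" "\<not> E b d"
  shows False
  using no_2K2 assms unfolding has_induced_2K2_def by blast

lemma no_induced_C4:
  assumes "a \<in> V" "b \<in> V" "c \<in> V" "d \<in> V" "distinct [a, b, c, d]"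
    and "E a b" "E b c" "E c d" "E d a" "\<not> E a c" "\<not> E b d"
  shows False
  using no_C4 assms unfolding has_induced_C4_def by blast

lemma max_clique_nonneighbour:
  assumes "heaviest_max_clique V E K" and "v \<in> V - K"
  shows "\<exists>a\<in>K. \<not> E a v"
proof (rule ccontr)
  assume "\<not> (\<exists>a\<in>K. \<not> E a v)"
  moreover have K: "is_clique V E K" using assms(1) by (simp add: heaviest_max_clique_def)
  ultimately have "is_clique V E (insert v K)"
    using assms(2) by (auto simp: is_clique_def edge_sym_iff)
  then have "card (insert v K) \<le> card K" using assms(1) by (simp add: heaviest_max_clique_def)
  then show False using assms(2) finite_clique[OF K] by simp
qed

lemma C5_free_clique_extension:
  assumes no_C5: "\<nexists>c0 c1 c2 c3 c4. induced_C5 V E c0 c1 c2 c3 c4"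
    and K: "is_clique V E K" and a: "a \<in> K"
    and xyz: "x \<in> V - K" "y \<in> V - K" "z \<in> V - K"
    and edges: "E x y" "E x z" "E a z" and non_edges: "\<not> E y z" "\<not> E x a" "\<not> E y a"
    and y_K: "\<forall>b\<in>K - {a}. E y b"
  shows "is_clique V E (insert z K)"
proof -
  have K_edges: "\<And>u v. u \<in> K \<Longrightarrow> v \<in> K \<Longrightarrow> u \<noteq> v \<Longrightarrow> E u v" and "K \<subseteq> V"
    using K by (auto simp: is_clique_def)
  have distinct: "x \<noteq> y" "x \<noteq> z" "y \<noteq> z"
    using edges non_edges edge_sym by metis+
  have x_K: "E x b" if b: "b \<in> K - {a}" for b
  proof (rule ccontr)
    assume x_b: "\<not> E x b"
    show False
    proof (cases "E z b")
      case True
      show False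
        by (rule no_induced_C4[of y x z b])
          (use xyz b \<open>K \<subseteq> V\<close> distinct edges non_edges y_K x_b True in \<open>auto simp: edge_sym_iff\<close>)
    next
      case False
      have "induced_C5 V E y x z a b"
        unfolding induced_C5_def
        using xyz a b \<open>K \<subseteq> V\<close> distinct edges non_edges y_K x_b False K_edges[of a b]
        by (auto simp: edge_sym_iff)
      with no_C5 show False by blast
    qed
  qed
  have z_K: "E z b" if b: "b \<in> K - {a}" for b
  proof (rule ccontr)
    assume z_b: "\<not> E z b"
    show False
      by (rule no_induced_C4[of x b a z])
        (use xyz a b \<open>K \<subseteq> V\<close> distinct edges non_edges x_K[OF b] z_b K_edges[of b a]
          in \<open>auto simp: edge_sym_iff\<close>)
  qed
  show ?thesis
    using K xyz(3) z_K edges(3) by (auto simp: is_clique_def edge_sym_iff)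
qed

lemma heaviest_max_clique_exchange:
  assumes heaviest: "heaviest_max_clique V E K" and "a \<in> K" and "y \<in> V - K"
    and "\<forall>b\<in>K - {a}. E y b"
  shows "degree V E y \<le> degree V E a"
proof -
  have K: "is_clique V E K" using heaviest by (simp add: heaviest_max_clique_def)
  then have fin: "finite K" by (rule finite_clique)
  have "is_clique V E (insert y (K - {a}))"
    using K assms(3,4) by (auto simp: is_clique_def edge_sym_iff)
  moreover have "card (insert y (K - {a})) = card K"
  proof -
    have "card (insert y (K - {a})) = Suc (card (K - {a}))" using fin assms(3) by simp
    then show ?thesis using card_Suc_Diff1[OF fin assms(2)] by simp
  qed
  ultimately have "sum (degree V E) (insert y (K - {a})) \<le> sum (degree V E) K"
    using heaviest by (simp add: heaviest_max_clique_def)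
  then show ?thesis using fin assms(2,3) by (simp add: sum.remove)
qed

lemma ex_neighbour_not_shared:
  assumes "degree V E y \<le> degree V E a" and "E y x" and "\<not> E a x"
  obtains z where "E a z" and "\<not> E y z"
proof -
  have "\<not> (\<forall>u. E a u \<longrightarrow> E y u)"
  proof
    assume "\<forall>u. E a u \<longrightarrow> E y u"
    then have "{u \<in> V. E a u} \<subset> {u \<in> V. E y u}"
      using assms(2,3) edge_vertices by auto
    then have "degree V E a < degree V E y"
      unfolding degree_def using finite_vertices by (simp add: psubset_card_mono)
    with assms(1) show False by simp
  qed
  then show ?thesis using that by blast
qed

text \<open>If \<open>y\<close> dominated \<open>x\<close> on \<open>K\<close>, then \<open>y\<close> would see all of \<open>K\<close> but one vertex \<open>a\<close>; exchanging
  \<open>a\<close> for \<open>y\<close> and maximality of the degree sum give a neighbour \<open>z\<close> of \<open>a\<close> missed by \<open>y\<close>, and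
  \<open>K + z\<close> would be a larger clique.\<close>

lemma C5_free_max_clique_no_dominated_edge:
  assumes no_C5: "\<nexists>c0 c1 c2 c3 c4. induced_C5 V E c0 c1 c2 c3 c4"
    and heaviest: "heaviest_max_clique V E K"
    and xy: "x \<in> V - K" "y \<in> V - K" "E x y" and dominated: "\<forall>b\<in>K. E x b \<longrightarrow> E y b"
  shows False
proof -
  have K: "is_clique V E K" using heaviest by (simp add: heaviest_max_clique_def)
  then have "K \<subseteq> V" and fin: "finite K" using finite_clique by (auto simp: is_clique_def)
  obtain a where a: "a \<in> K" "\<not> E a y" using max_clique_nonneighbour[OF heaviest xy(2)] by blast
  have "\<not> E y a" using a(2) by (simp add: edge_sym_iff)
  moreover from this have "\<not> E x a" using dominated a(1) by blast
  ultimately have non_edges: "\<not> E y a" "\<not> E x a" by blast+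
  have y_K: "\<forall>b\<in>K - {a}. E y b"
  proof (rule ballI, rule ccontr)
    fix b assume b: "b \<in> K - {a}" and y_b: "\<not> E y b"
    show False
      by (rule no_induced_2K2[of x y a b])
        (use xy a b \<open>K \<subseteq> V\<close> K non_edges y_b dominated edge_irrefl in
          \<open>auto simp: is_clique_def edge_sym_iff\<close>)
  qed
  have "\<not> E a x" using non_edges(2) by (simp add: edge_sym_iff)
  with heaviest_max_clique_exchange[OF heaviest a(1) xy(2) y_K] edge_sym[OF xy(3)]
  obtain z where z: "E a z" "\<not> E y z" by (rule ex_neighbour_not_shared)
  have "z \<in> V" using edge_vertices[OF z(1)] by simp
  moreover have "z \<notin> K"
    using z y_K edge_irrefl by (metis DiffI singletonD)
  ultimately have "z \<in> V - K" by simp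
  moreover have "E x z"
  proof (rule ccontr)
    assume x_z: "\<not> E x z"
    have "z \<noteq> x" "z \<noteq> y" using z non_edges edge_sym by metis+
    moreover have "a \<noteq> x" "a \<noteq> y" using a(1) xy by auto
    moreover have "a \<noteq> z" using z(1) edge_irrefl by metis
    moreover have "x \<noteq> y" using xy(3) edge_irrefl by metis
    moreover have "\<not> E y z" "\<not> E x a" "\<not> E y a" by (fact z(2) non_edges(2,1))+
    ultimately show False
      using no_induced_2K2[of x y a z] xy \<open>z \<in> V\<close> \<open>K \<subseteq> V\<close> a(1) z(1) x_z by auto
  qed
  ultimately have "is_clique V E (insert z K)"
    using C5_free_clique_extension[OF no_C5 K a(1) xy(1,2)] xy(3) z non_edges y_K by blast
  then have "card (insert z K) \<le> card K" using heaviest by (simp add: heaviest_max_clique_def)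
  with fin \<open>z \<in> V - K\<close> show False by simp
qed

lemma C5_free_split:
  assumes no_C5: "\<nexists>c0 c1 c2 c3 c4. induced_C5 V E c0 c1 c2 c3 c4"
  obtains K where "is_clique V E K" and "independent E (V - K)" and "\<forall>x\<in>V - K. \<exists>a\<in>K. \<not> E a x"
proof -
  obtain K where heaviest: "heaviest_max_clique V E K"
    using ex_heaviest_max_clique by blast
  then have K: "is_clique V E K" by (simp add: heaviest_max_clique_def)
  have "\<not> E x y" if xy: "x \<in> V - K" "y \<in> V - K" for x y
  proof
    assume "E x y"
    note no_dominated = C5_free_max_clique_no_dominated_edge[OF no_C5 heaviest]
    obtain a b where "a \<in> K" "E x a" "\<not> E y a" "b \<in> K" "E y b" "\<not> E x b"
      using no_dominated[OF xy \<open>E x y\<close>] no_dominated[OF xy(2,1) edge_sym[OF \<open>E x y\<close>]] by blast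
    then show False
      by (rule_tac no_induced_C4[of x a b y])
        (use xy K \<open>E x y\<close> edge_irrefl in \<open>auto simp: is_clique_def edge_sym_iff\<close>)
  qed
  then show ?thesis
    using that K max_clique_nonneighbour[OF heaviest] by (auto simp: independent_def)
qed

lemma induced_C5_rotate:
  "induced_C5 V E c0 c1 c2 c3 c4 \<Longrightarrow> induced_C5 V E c1 c2 c3 c4 c0"
  unfolding induced_C5_def by (auto simp: edge_sym_iff)

lemma C5_neighbour_next:
  assumes C: "induced_C5 V E c0 c1 c2 c3 c4" and v: "v \<in> V" "v \<notin> {c0, c1, c2, c3, c4}"
    and "E v c0" and "\<not> E v c1"
  shows False
proof -
  note C5 = C[unfolded induced_C5_def]
  consider "E v c2" | "\<not> E v c2" "\<not> E v c3" | "\<not> E v c2" "E v c3" "E v c4" | "\<not> E v c2" "E v c3" "\<not> E v c4"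
    by blast
  then show False
  proof cases
    case 1
    show False by (rule no_induced_C4[of v c0 c1 c2]) (use C5 v assms(4,5) 1 in \<open>auto simp: edge_sym_iff\<close>)
  next
    case 2
    show False by (rule no_induced_2K2[of v c0 c2 c3]) (use C5 v assms(4,5) 2 in \<open>auto simp: edge_sym_iff\<close>)
  next
    case 3
    show False by (rule no_induced_2K2[of v c4 c1 c2]) (use C5 v assms(4,5) 3 in \<open>auto simp: edge_sym_iff\<close>)
  next
    case 4
    show False by (rule no_induced_C4[of v c0 c4 c3]) (use C5 v assms(4,5) 4 in \<open>auto simp: edge_sym_iff\<close>)
  qed
qed

lemma C5_complete_or_anticomplete:
  assumes C: "induced_C5 V E c0 c1 c2 c3 c4" and v: "v \<in> V" "v \<notin> {c0, c1, c2, c3, c4}"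
  shows "(E v c0 \<and> E v c1 \<and> E v c2 \<and> E v c3 \<and> E v c4) \<or>
         (\<not> E v c0 \<and> \<not> E v c1 \<and> \<not> E v c2 \<and> \<not> E v c3 \<and> \<not> E v c4)"
proof -
  have C1: "induced_C5 V E c1 c2 c3 c4 c0" using induced_C5_rotate[OF C] .
  have C2: "induced_C5 V E c2 c3 c4 c0 c1" using induced_C5_rotate[OF C1] .
  have C3: "induced_C5 V E c3 c4 c0 c1 c2" using induced_C5_rotate[OF C2] .
  have C4: "induced_C5 V E c4 c0 c1 c2 c3" using induced_C5_rotate[OF C3] .
  show ?thesis
    using C5_neighbour_next[OF C v] C5_neighbour_next[OF C1 v(1)] C5_neighbour_next[OF C2 v(1)]
      C5_neighbour_next[OF C3 v(1)] C5_neighbour_next[OF C4 v(1)] v(2)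
    by auto
qed

end

section \<open>Graphs with an induced \<open>C\<^sub>5\<close>\<close>

locale two_K2_C4_free_C5 = two_K2_C4_free +
  fixes c0 c1 c2 c3 c4 :: 'a
  assumes C5: "induced_C5 V E c0 c1 c2 c3 c4"
begin

definition cycle :: "'a set" where
  "cycle = {c0, c1, c2, c3, c4}"

definition hub :: "'a set" where
  "hub = {v \<in> V - cycle. E v c0}"

definition far :: "'a set" where
  "far = {v \<in> V - cycle. \<not> E v c0}"

lemma C5_facts:
  "c0 \<in> V" "c1 \<in> V" "c2 \<in> V" "c3 \<in> V" "c4 \<in> V" "distinct [c0, c1, c2, c3, c4]"
  "E c0 c1" "E c1 c2" "E c2 c3" "E c3 c4" "E c4 c0"
  "\<not> E c0 c2" "\<not> E c0 c3" "\<not> E c1 c3" "\<not> E c1 c4" "\<not> E c2 c4"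
  using C5 by (simp_all add: induced_C5_def)

lemma hub_complete: "v \<in> hub \<Longrightarrow> c \<in> cycle \<Longrightarrow> E v c"
  using C5_complete_or_anticomplete[OF C5] by (auto simp: hub_def cycle_def)

lemma far_anticomplete: "v \<in> far \<Longrightarrow> c \<in> cycle \<Longrightarrow> \<not> E v c"
  using C5_complete_or_anticomplete[OF C5] by (auto simp: far_def cycle_def)

lemma hub_clique: "is_clique V E hub"
  unfolding is_clique_def
proof (intro conjI ballI impI)
  fix u v assume u: "u \<in> hub" and v: "v \<in> hub" and "u \<noteq> v"
  have "u \<in> V" "v \<in> V" "u \<notin> cycle" "v \<notin> cycle" using u v by (auto simp: hub_def)
  moreover have "E u c0" "E u c2" "E v c0" "E v c2"
    using hub_complete u v by (auto simp: cycle_def)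
  ultimately show "E u v"
    using no_induced_C4[of u c0 v c2] \<open>u \<noteq> v\<close> C5_facts by (auto simp: cycle_def edge_sym_iff)
qed (auto simp: hub_def)

lemma far_independent: "independent E far"
  unfolding independent_def
proof (intro ballI notI)
  fix u v assume u: "u \<in> far" and v: "v \<in> far" and "E u v"
  have "u \<in> V" "v \<in> V" "u \<notin> cycle" "v \<notin> cycle" "u \<noteq> v"
    using u v \<open>E u v\<close> edge_irrefl by (auto simp: far_def)
  moreover have "\<not> E u c0" "\<not> E u c1" "\<not> E v c0" "\<not> E v c1"
    using far_anticomplete u v by (auto simp: cycle_def)
  ultimately show False
    using no_induced_2K2[of u v c0 c1] \<open>E u v\<close> C5_facts by (auto simp: cycle_def)
qed

lemma vertex_cases: "v \<in> V \<Longrightarrow> v \<in> hub \<or> v \<in> cycle \<or> v \<in> far"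
  by (auto simp: hub_def far_def)

lemma far_neighbour_in_hub:
  assumes "v \<in> far" and "E v u"
  shows "u \<in> hub"
proof -
  have "u \<in> V" using assms(2) edge_vertices by simp
  moreover have "u \<notin> cycle" using assms far_anticomplete by blast
  moreover have "u \<notin> far" using assms far_independent by (auto simp: independent_def)
  ultimately show ?thesis using vertex_cases by blast
qed

lemma cycle_neighbour:
  assumes "c \<in> cycle" and "E c u"
  shows "u \<in> hub \<or> u \<in> cycle"
proof -
  have "u \<in> V" using assms(2) edge_vertices by simp
  moreover have "u \<notin> far" using assms far_anticomplete edge_sym by blast
  ultimately show ?thesis using vertex_cases by blast
qed

lemma cycle_neighbours:
  "E c0 u \<Longrightarrow> u \<in> hub \<or> u = c1 \<or> u = c4"
  "E c1 u \<Longrightarrow> u \<in> hub \<or> u = c0 \<or> u = c2"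
  "E c2 u \<Longrightarrow> u \<in> hub \<or> u = c1 \<or> u = c3"
  "E c3 u \<Longrightarrow> u \<in> hub \<or> u = c2 \<or> u = c4"
  "E c4 u \<Longrightarrow> u \<in> hub \<or> u = c3 \<or> u = c0"
  using cycle_neighbour[of c0 u] cycle_neighbour[of c1 u] cycle_neighbour[of c2 u]
    cycle_neighbour[of c3 u] cycle_neighbour[of c4 u] C5_facts edge_irrefl
  by (auto simp: cycle_def edge_sym_iff)

lemma cycle_not_hub: "c \<in> cycle \<Longrightarrow> c \<notin> hub"
  by (simp add: hub_def)

lemma finite_hub: "finite hub"
  using finite_vertices by (simp add: hub_def)

text \<open>The labels \<open>c\<^sub>0 | c\<^sub>1, c\<^sub>3 | c\<^sub>2, c\<^sub>4\<close> 3-colour the cycle; \<open>far\<close> vertices, which only see \<open>hub\<close>,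
  share the label of \<open>c\<^sub>0\<close>.\<close>

definition C5_label :: "'a \<Rightarrow> 'a" where
  "C5_label v = (if v \<in> hub then v else if v = c1 \<or> v = c3 then c1
     else if v = c2 \<or> v = c4 then c2 else c0)"

definition labels :: "'a set" where
  "labels = insert c0 (insert c1 (insert c2 hub))"

lemma card_labels: "card labels = card hub + 3"
  using finite_hub cycle_not_hub C5_facts by (simp add: labels_def cycle_def)

lemma C5_label_edge:
  assumes "E u v"
  shows "C5_label u \<noteq> C5_label v"
proof -
  have cyc: "c0 \<notin> hub" "c1 \<notin> hub" "c2 \<notin> hub" "c3 \<notin> hub" "c4 \<notin> hub"
    using cycle_not_hub by (auto simp: cycle_def)
  have off_hub: "C5_label w \<in> cycle" if "w \<notin> hub" for w
    using that by (auto simp: C5_label_def cycle_def)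
  consider "u \<in> hub" "v \<in> hub" | "u \<in> hub" "v \<notin> hub" | "u \<notin> hub" "v \<in> hub"
    | "u \<in> cycle" "v \<in> cycle"
    using assms vertex_cases edge_vertices far_neighbour_in_hub edge_sym by metis
  then show ?thesis
  proof cases
    case 1
    then show ?thesis using assms edge_irrefl by (auto simp: C5_label_def)
  next
    case 2
    then show ?thesis using off_hub[of v] cycle_not_hub by (auto simp: C5_label_def)
  next
    case 3
    then show ?thesis using off_hub[of u] cycle_not_hub by (auto simp: C5_label_def)
  next
    case 4
    then show ?thesis
      using assms cycle_neighbours[of v] cyc C5_facts
      by (auto simp: cycle_def C5_label_def edge_sym_iff)
  qed
qed

lemma proper_labelling_C5: "proper_labelling V E C5_label labels"
proof
  show "C5_label v \<in> labels" if "v \<in> V" for v by (simp add: C5_label_def labels_def)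
  show "finite labels" using finite_hub by (simp add: labels_def)
qed (fact C5_label_edge)

lemma card_labels_le_colours:
  assumes "is_colouring k V E \<alpha>"
  shows "card labels \<le> k"
proof -
  have "cycle \<subseteq> V" using C5_facts by (simp add: cycle_def)
  then have "card hub + card (\<alpha> ` cycle) \<le> k"
    using card_clique_plus_colours_le[OF assms hub_clique] hub_complete by blast
  moreover have "3 \<le> card (\<alpha> ` cycle)"
    unfolding cycle_def by (rule three_le_card_colours_C5[OF assms]) (fact C5_facts)+
  ultimately show ?thesis by (simp add: card_labels)
qed

lemma recolourable_within_cycle_vertex:
  assumes "is_colouring l V E \<alpha>" and "c \<in> cycle" and "d \<in> {1..l}" and "\<And>u. E c u \<Longrightarrow> \<alpha> u \<noteq> d"
  shows "recolourable_within l V E \<alpha> (\<alpha>(c := d)) 1"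
proof (rule recolourable_within_fun_upd[OF assms(1) _ assms(3)])
  show "c \<in> V" using assms(2) C5_facts by (auto simp: cycle_def)
qed (use assms(4) edge_sym in blast)+

text \<open>The order matters: \<open>c\<^sub>2, c\<^sub>4\<close> move to \<open>y\<close> first, then \<open>c\<^sub>1, c\<^sub>3\<close> to \<open>x\<close>, so that each new
  colour is absent from the current neighbourhood.\<close>

lemma recolourable_within_cycle:
  assumes \<alpha>: "is_colouring l V E \<alpha>" and x: "x \<in> {1..l}" "x \<notin> \<alpha> ` insert c0 hub"
    and y: "y \<in> {1..l}" "y \<notin> \<alpha> ` insert c0 (insert c1 (insert c3 hub))" and "x \<noteq> y"
  shows "recolourable_within l V E \<alpha> (\<alpha>(c2 := y, c4 := y, c1 := x, c3 := x)) 4"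
proof -
  have cyc: "c0 \<in> cycle" "c1 \<in> cycle" "c2 \<in> cycle" "c3 \<in> cycle" "c4 \<in> cycle"
    by (simp_all add: cycle_def)
  note hub = cycle_not_hub[OF cyc(1)] cycle_not_hub[OF cyc(2)] cycle_not_hub[OF cyc(3)]
    cycle_not_hub[OF cyc(4)] cycle_not_hub[OF cyc(5)]
  note distinct = C5_facts(6)
  have r1: "recolourable_within l V E \<alpha> (\<alpha>(c2 := y)) 1"
    by (rule recolourable_within_cycle_vertex[OF \<alpha> cyc(3) y(1)])
      (use cycle_neighbours(3) y(2) in blast)
  have r2: "recolourable_within l V E (\<alpha>(c2 := y)) (\<alpha>(c2 := y, c4 := y)) 1"
    by (rule recolourable_within_cycle_vertex[OF _ cyc(5) y(1)])
      (use recolourable_within_colourings[OF r1] cycle_neighbours(5) y(2) hub distinct in auto)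
  have r3: "recolourable_within l V E (\<alpha>(c2 := y, c4 := y)) (\<alpha>(c2 := y, c4 := y, c1 := x)) 1"
    by (rule recolourable_within_cycle_vertex[OF _ cyc(2) x(1)])
      (use recolourable_within_colourings[OF r2] cycle_neighbours(2) x(2) \<open>x \<noteq> y\<close> hub distinct in auto)
  have r4: "recolourable_within l V E (\<alpha>(c2 := y, c4 := y, c1 := x)) (\<alpha>(c2 := y, c4 := y, c1 := x, c3 := x)) 1"
    by (rule recolourable_within_cycle_vertex[OF _ cyc(4) x(1)])
      (use recolourable_within_colourings[OF r3] cycle_neighbours(4) x(2) \<open>x \<noteq> y\<close> hub distinct in auto)
  show ?thesis
    using recolourable_within_trans[OF recolourable_within_trans[OF recolourable_within_trans[OF r1 r2] r3] r4]
    by (simp add: numeral_eq_Suc)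
qed

lemma clique_colouring_C5_update:
  assumes \<alpha>: "is_colouring l V E \<alpha>" and x: "x \<in> {1..l}" "x \<notin> \<alpha> ` insert c0 hub"
    and y: "y \<in> {1..l}" "y \<notin> \<alpha> ` insert c0 hub" and "x \<noteq> y"
  shows "clique_colouring l labels (\<alpha>(c1 := x, c2 := y))"
proof -
  define \<pi> where "\<pi> = \<alpha>(c1 := x, c2 := y)"
  have hub: "c0 \<notin> hub" "c1 \<notin> hub" "c2 \<notin> hub"
    using cycle_not_hub by (auto simp: cycle_def)
  have on_cycle: "\<pi> c0 = \<alpha> c0" "\<pi> c1 = x" "\<pi> c2 = y"
    using C5_facts(6) by (auto simp: \<pi>_def)
  have on_hub: "\<pi> v = \<alpha> v" if "v \<in> hub" for v using that hub by (auto simp: \<pi>_def)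
  have "clique_colouring l hub \<alpha>" using clique_colouring_restrict[OF \<alpha> hub_clique] .
  then have inj_hub: "inj_on \<pi> hub" and image_hub: "\<pi> ` hub = \<alpha> ` hub" "\<alpha> ` hub \<subseteq> {1..l}"
    using inj_on_cong[of hub \<pi> \<alpha>] on_hub image_cong[of hub hub \<pi> \<alpha>]
    by (auto simp: clique_colouring_def)
  have "\<alpha> c0 \<notin> \<alpha> ` hub"
    using \<alpha> hub_complete unfolding is_colouring_def cycle_def by fastforce
  moreover have "\<alpha> c0 \<in> {1..l}" using \<alpha> C5_facts by (simp add: is_colouring_def)
  ultimately have "clique_colouring l labels \<pi>"
    using x y \<open>x \<noteq> y\<close> hub inj_hub image_hub on_cycle
    unfolding clique_colouring_def labels_def by (auto simp: inj_on_insert)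
  then show ?thesis by (simp add: \<pi>_def)
qed

lemma C5_spare_colours:
  assumes "card labels < l" and "is_colouring l V E \<alpha>"
  obtains x y where "x \<in> {1..l}" "x \<notin> \<alpha> ` insert c0 hub"
    and "y \<in> {1..l}" "y \<notin> \<alpha> ` insert c0 (insert c1 (insert c3 hub))" and "x \<noteq> y"
proof -
  obtain y where y: "y \<in> {1..l}" "y \<notin> \<alpha> ` insert c0 (insert c1 (insert c3 hub))"
  proof (rule ex_colour_not_in)
    have "card (\<alpha> ` insert c0 (insert c1 (insert c3 hub))) \<le> card (insert c0 (insert c1 (insert c3 hub)))"
      using finite_hub by (intro card_image_le) simp
    also have "\<dots> = card hub + 3"
      using finite_hub cycle_not_hub C5_facts(6) by (simp add: cycle_def)
    finally show "card (\<alpha> ` insert c0 (insert c1 (insert c3 hub))) < l"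
      using assms(1) card_labels by simp
  qed (use finite_hub in simp)
  obtain x where x: "x \<in> {1..l}" "x \<notin> insert y (\<alpha> ` insert c0 hub)"
  proof (rule ex_colour_not_in)
    have card_le: "card (insert z A) \<le> Suc (card A)" if "finite A" for z and A :: "nat set"
      using that by (simp add: card_insert_if)
    have "card (insert y (\<alpha> ` insert c0 hub)) \<le> Suc (Suc (card hub))"
      using card_le[of "\<alpha> ` insert c0 hub" y] card_le[of "\<alpha> ` hub" "\<alpha> c0"]
        card_image_le[OF finite_hub, of \<alpha>] finite_hub by simp
    then show "card (insert y (\<alpha> ` insert c0 hub)) < l" using assms(1) card_labels by simp
  qed (use finite_hub in simp)
  show ?thesis using that x y by auto
qed

lemma card_far_le: "card far + 5 \<le> card V"
proof -
  have "cycle \<subseteq> V" "finite cycle" using C5_facts by (auto simp: cycle_def)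
  then have "card (V - cycle) = card V - card cycle" by (rule card_Diff_subset[rotated])
  moreover have "card far \<le> card (V - cycle)"
    using finite_vertices by (intro card_mono) (auto simp: far_def)
  moreover have "card cycle = 5" using C5_facts(6) by (simp add: cycle_def)
  moreover have "card cycle \<le> card V"
    using \<open>cycle \<subseteq> V\<close> finite_vertices by (rule card_mono[rotated])
  ultimately show ?thesis by linarith
qed

lemma C5_reduction:
  assumes "card labels < l" and \<alpha>: "is_colouring l V E \<alpha>"
  shows "\<exists>\<pi>. clique_colouring l labels \<pi> \<and>
           recolourable_within l V E \<alpha> (class_colouring V C5_label \<pi>) (card V)"
proof -
  interpret proper_labelling V E C5_label labels by (rule proper_labelling_C5)
  obtain x y where x: "x \<in> {1..l}" "x \<notin> \<alpha> ` insert c0 hub"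
    and y: "y \<in> {1..l}" "y \<notin> \<alpha> ` insert c0 (insert c1 (insert c3 hub))" and "x \<noteq> y"
    using C5_spare_colours[OF assms] .
  let ?\<pi> = "\<alpha>(c1 := x, c2 := y)" and ?\<alpha>' = "\<alpha>(c2 := y, c4 := y, c1 := x, c3 := x)"
  have \<pi>: "clique_colouring l labels ?\<pi>"
    using clique_colouring_C5_update[OF \<alpha> x] y \<open>x \<noteq> y\<close> by auto
  have "recolourable_within l V E \<alpha> ?\<alpha>' 4"
    using recolourable_within_cycle[OF \<alpha> x y \<open>x \<noteq> y\<close>] .
  moreover have "recolourable_within l V E ?\<alpha>' (class_colouring V C5_label ?\<pi>) (card far)"
  proof (rule recolourable_within_onto_class_colouring[OF _ \<pi> _ far_independent])
    show "is_colouring l V E ?\<alpha>'" using recolourable_within_colourings[OF calculation] by simp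
    show "far \<subseteq> V" by (auto simp: far_def)
    show "\<forall>v\<in>V - far. ?\<alpha>' v = ?\<pi> (C5_label v)"
      using vertex_cases cycle_not_hub C5_facts(6) by (auto simp: C5_label_def cycle_def)
  qed
  ultimately have "recolourable_within l V E \<alpha> (class_colouring V C5_label ?\<pi>) (4 + card far)"
    by (rule recolourable_within_trans)
  then show ?thesis
    using \<pi> card_far_le recolourable_within_mono by fastforce
qed

lemma C5_reducing_labelling: "reducing_labelling V E C5_label labels"
  unfolding reducing_labelling_def
  using proper_labelling_C5 card_labels_le_colours C5_reduction by blast

end

lemma (in two_K2_C4_free) ex_reducing_labelling: "\<exists>\<gamma> U. reducing_labelling V E \<gamma> (U :: 'a set)"
proof (cases "\<exists>c0 c1 c2 c3 c4. induced_C5 V E c0 c1 c2 c3 c4")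
  case True
  then obtain c0 c1 c2 c3 c4 where "induced_C5 V E c0 c1 c2 c3 c4" by blast
  then interpret two_K2_C4_free_C5 V E c0 c1 c2 c3 c4 by unfold_locales
  show ?thesis using C5_reducing_labelling by blast
next
  case False
  then obtain K where "is_clique V E K" "independent E (V - K)" "\<forall>v\<in>V - K. \<exists>a\<in>K. \<not> E a v"
    using C5_free_split by blast
  then show ?thesis using split_reducing_labelling by blast
qed

theorem theorem7:
  fixes V :: "'a set" and E :: "'a \<Rightarrow> 'a \<Rightarrow> bool" and l :: nat
  assumes "simple_graph V E"
    and "\<not> has_induced_2K2 V E"
    and "\<not> has_induced_C4 V E"
    and "l \<ge> chromatic_number V E + 1"
  shows "recon_connected l V E \<and> recon_diam_le l V E (4 * card V)"
proof -
  interpret two_K2_C4_free V E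
    using assms(1-3) by unfold_locales
  obtain \<gamma> and U :: "'a set" where "reducing_labelling V E \<gamma> U"
    using ex_reducing_labelling by blast
  moreover have "chromatic_number V E < l" using assms(4) by simp
  ultimately have "recon_diam_le l V E (4 * card V)"
    by (rule recon_diam_le_if_reducing_labelling)
  then show ?thesis using recon_connected_if_diam_le by blast
qed

end
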